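(* For every finite simple undirected graph $G$ on $n\ge 4$ vertices, \[ \lambda_4(G)\ \le\ \frac{1+\sqrt5}{12}\,n-1 . \]
   Context: For a graph $G$ on $n$ vertices, $\lambda_1(G)\ge\cdots\ge\lambda_n(G)$ are the eigenvalues of its adjacency matrix, listed in nonincreasing order. *)

theory Defs
  imports "Jordan_Normal_Form.Char_Poly"
begin

definition simple_graph :: "nat \<Rightarrow> (nat \<Rightarrow> nat \<Rightarrow> bool) \<Rightarrow> bool" where
  "simple_graph n E \<longleftrightarrow> (\<forall>i<n. \<forall>j<n. E i j \<longleftrightarrow> E j i) \<and> (\<forall>i<n. \<not> E i i)"

definition adj_matrix :: "nat \<Rightarrow> (nat \<Rightarrow> nat \<Rightarrow> bool) \<Rightarrow> real mat" where
  "adj_matrix n E = mat n n (\<lambda>(i, j). if E i j then 1 else 0)"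

text \<open>The matrix is real symmetric, so all roots are real.\<close>
definition adj_eigenvalues :: "nat \<Rightarrow> (nat \<Rightarrow> nat \<Rightarrow> bool) \<Rightarrow> real list" where
  "adj_eigenvalues n E = rev (sorted_list_of_multiset (proots (char_poly (adj_matrix n E))))"

text \<open>lambda_k(G), 1-indexed.\<close>
definition graph_lambda :: "nat \<Rightarrow> (nat \<Rightarrow> nat \<Rightarrow> bool) \<Rightarrow> nat \<Rightarrow> real" where
  "graph_lambda n E k = adj_eigenvalues n E ! (k - 1)"

end

theory Submission
  imports Defs "Jordan_Normal_Form.Schur_Decomposition" "HOL-Analysis.Convex"
begin

(*
  Take orthonormal eigenvectors p_1, ..., p_4 of the adjacency matrix A for lambda_1, ..., lambda_4.
  Their span contains a three-dimensional subspace orthogonal to the all-ones vector, exhibited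
  explicitly by quaternion multiplication; let u_1, u_2, u_3 be an orthonormal basis of it and
  T = u_1 u_1^T + u_2 u_2^T + u_3 u_3^T. Each u_k has Rayleigh quotient at least lambda_4, so
  3 lambda_4 <= sum_ij A_ij T_ij. As A is a 0/1 matrix with zero diagonal, sum_ij T_ij = 0 and
  tr T = 3, the right-hand side is at most (sum_ij |T_ij|)/2 - 3.

  It remains to bound sum_ij |T_ij| by (1 + sqrt 5)/2 n. Write T_ij = r_i r_j s_ij, where r_i is
  the length of the i-th row x_i of (u_1 u_2 u_3) and s_ij the cosine of the angle between x_i and
  x_j. The quartic a + b s^2 + c s^4 with c < 0 that agrees with |s| at s = 1 and touches it at
  s = 1/sqrt 5 majorizes |s| on [-1, 1]. Its s^4 term is controlled by the positive definiteness
  of the Legendre polynomial P_4 on the sphere (the addition theorem for spherical harmonics of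
  degree 4), the other terms by sum_ij r_i r_j s_ij^2 <= n and (sum_i r_i)^2 <= 3 n, which hold
  because T is an orthogonal projection of rank 3.
*)

section \<open>Spectral theorem for real symmetric matrices\<close>

lemma real_symmetric_form_real:
  fixes A :: "real mat" and v :: "complex vec"
  assumes A: "A \<in> carrier_mat n n" and sym: "transpose_mat A = A" and v: "v \<in> carrier_vec n"
  shows "cnj (v \<bullet>c (map_mat complex_of_real A *\<^sub>v v))
    = v \<bullet>c (map_mat complex_of_real A *\<^sub>v v)"
proof -
  have A_sym: "A $$ (i, j) = A $$ (j, i)" if "i < n" "j < n" for i j
    using arg_cong[OF sym, of "\<lambda>M. M $$ (j, i)"] that A by simp
  have expand: "v \<bullet>c (map_mat complex_of_real A *\<^sub>v v)
      = (\<Sum>i<n. \<Sum>j<n. of_real (A $$ (i, j)) * (v $ i * cnj (v $ j)))"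
    using A v by (simp add: scalar_prod_def mult_mat_vec_def lessThan_atLeast0 sum_distrib_left mult_ac)
  have "cnj (\<Sum>i<n. \<Sum>j<n. of_real (A $$ (i, j)) * (v $ i * cnj (v $ j)))
      = (\<Sum>j<n. \<Sum>i<n. of_real (A $$ (j, i)) * (v $ j * cnj (v $ i)))"
    by (subst sum.swap) (simp add: A_sym mult_ac)
  then show ?thesis unfolding expand .
qed

lemma real_symmetric_eigenvalue_real:
  fixes A :: "real mat" and a :: complex
  assumes A: "A \<in> carrier_mat n n" and sym: "transpose_mat A = A"
    and "eigenvalue (map_mat complex_of_real A) a"
  shows "Im a = 0"
proof -
  obtain v where v: "v \<in> carrier_vec n" "v \<noteq> 0\<^sub>v n"
    and Av: "map_mat complex_of_real A *\<^sub>v v = a \<cdot>\<^sub>v v"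
    using assms(3) A unfolding eigenvalue_def eigenvector_def by auto
  have "v \<bullet>c (map_mat complex_of_real A *\<^sub>v v) = cnj a * (v \<bullet>c v)"
    unfolding Av using v by (simp add: conjugate_smult_vec scalar_prod_smult_distrib)
  moreover have "v \<bullet>c v > 0" using v by simp
  ultimately show ?thesis
    using real_symmetric_form_real[OF A sym v(1)]
    by (auto simp: complex_eq_iff less_complex_def)
qed

lemma real_symmetric_char_poly_splits:
  fixes A :: "real mat"
  assumes A: "A \<in> carrier_mat n n" and sym: "transpose_mat A = A"
  shows "\<exists>es. char_poly A = (\<Prod>e\<leftarrow>es. [:- e, 1:])"
proof -
  interpret rp: map_poly_inj_comm_ring_hom "of_real :: real \<Rightarrow> complex" ..
  define Ac where "Ac = map_mat complex_of_real A"
  have Ac: "Ac \<in> carrier_mat n n" unfolding Ac_def using A by simp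
  from char_poly_factorized[OF Ac] obtain as
    where cpc: "char_poly Ac = (\<Prod>a\<leftarrow>as. [:- a, 1:])" by blast
  have cph: "char_poly Ac = map_poly of_real (char_poly A)"
    unfolding Ac_def using of_real_hom.char_poly_hom[OF A] by simp
  have real: "Im a = 0" if a: "a \<in> set as" for a
  proof -
    have "poly (char_poly Ac) a = 0" unfolding cpc using a
      by (induct as) auto
    hence "eigenvalue Ac a" using eigenvalue_root_char_poly[OF Ac] by simp
    thus ?thesis using real_symmetric_eigenvalue_real[OF A sym] unfolding Ac_def by blast
  qed
  define es where "es = map Re as"
  have "map_poly (of_real :: real \<Rightarrow> complex) (\<Prod>e\<leftarrow>es. [:- e, 1:])
      = (\<Prod>e\<leftarrow>es. map_poly of_real [:- e, 1:])"
    by (simp add: rp.hom_prod_list o_def)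
  also have "\<dots> = (\<Prod>a\<leftarrow>as. [:- a, 1:])" unfolding es_def using real
    by (induct as) (auto simp: complex_eq_iff)
  finally have "map_poly (of_real :: real \<Rightarrow> complex) (\<Prod>e\<leftarrow>es. [:- e, 1:])
      = map_poly of_real (char_poly A)"
    using cpc cph by simp
  hence "char_poly A = (\<Prod>e\<leftarrow>es. [:- e, 1:])" using rp.injectivity by metis
  thus ?thesis by blast
qed

lemma proots_prod_linear_factors: "proots (\<Prod>e\<leftarrow>es. [:- e, 1:]) = mset (es :: real list)"
proof (induct es)
  case (Cons a es)
  have nz: "(\<Prod>e\<leftarrow>es. [:- e, 1:]) \<noteq> (0 :: real poly)"
    by (auto simp: prod_list_zero_iff)
  have "proots ([:- a, 1:] * (\<Prod>e\<leftarrow>es. [:- e, 1:]))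
      = proots [:- a, 1:] + proots (\<Prod>e\<leftarrow>es. [:- e, 1:])"
    using nz by (intro proots_mult) auto
  thus ?case using Cons by simp
qed simp

lemma orthonormal_basis_extension:
  fixes v :: "real vec"
  assumes v: "v \<in> carrier_vec n" and v0: "v \<noteq> 0\<^sub>v n"
  obtains W c where "W \<in> carrier_mat n n" and "transpose_mat W * W = 1\<^sub>m n"
    and "col W 0 = c \<cdot>\<^sub>v v"
proof -
  have n0: "n \<noteq> 0" using v v0 by (intro notI) (auto intro!: eq_vecI)
  interpret cof_vec_space n "TYPE(real)" .
  define b where "b = basis_completion v"
  from basis_completion[OF v v0, folded b_def]
  have b: "set b \<subseteq> carrier_vec n" and dist_b: "distinct b" and indep: "\<not> lin_dep (set b)"
    and hdb: "hd b = v" and len_b: "length b = n" by auto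
  define ws where "ws = gram_schmidt n b"
  from gram_schmidt_result[OF b dist_b indep ws_def]
  have ws: "set ws \<subseteq> carrier_vec n" "corthogonal ws" "length ws = n" by (auto simp: len_b)
  from hdb len_b n0 obtain vs where "b = v # vs" by (cases b) auto
  then have "hd ws = v" unfolding ws_def using v by simp
  then have ws0: "ws ! 0 = v" using ws(3) n0 by (metis hd_conv_nth list.size(3))
  have wsc: "ws ! i \<in> carrier_vec n" if "i < n" for i using ws that by auto
  have wsorth: "ws ! i \<bullet> ws ! j = 0 \<longleftrightarrow> i \<noteq> j" if "i < n" "j < n" for i j
    using corthogonalD[OF ws(2)] ws(3) that by simp
  have pos: "ws ! i \<bullet> ws ! i > 0" if "i < n" for i
  proof -
    have "0 \<le> ws ! i \<bullet> ws ! i" unfolding scalar_prod_def by (intro sum_nonneg) simp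
    with wsorth[OF that that] show ?thesis by simp
  qed
  define nr where "nr i = 1 / sqrt (ws ! i \<bullet> ws ! i)" for i
  define W where "W = mat_of_cols n (map (\<lambda>i. nr i \<cdot>\<^sub>v ws ! i) [0..<n])"
  have W: "W \<in> carrier_mat n n" unfolding W_def by auto
  have colW: "col W i = nr i \<cdot>\<^sub>v ws ! i" if "i < n" for i
    unfolding W_def using wsc that by (subst col_mat_of_cols) auto
  have "col W i \<bullet> col W j = (if i = j then 1 else 0)" if i: "i < n" and j: "j < n" for i j
  proof -
    have "col W i \<bullet> col W j = nr i * nr j * (ws ! i \<bullet> ws ! j)"
      using colW[OF i] colW[OF j] wsc[OF i] wsc[OF j]
      by (simp add: smult_scalar_prod_distrib scalar_prod_smult_distrib)
    also have "\<dots> = (if i = j then 1 else 0)"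
      using wsorth[OF i j] pos[OF i] unfolding nr_def by (auto simp: field_simps)
    finally show ?thesis .
  qed
  then have "transpose_mat W * W = 1\<^sub>m n"
    by (intro eq_matI) (use W in auto)
  moreover have "col W 0 = nr 0 \<cdot>\<^sub>v v" using colW[of 0] n0 ws0 by simp
  ultimately show thesis by (rule that[OF W])
qed

lemma orthogonal_deflation:
  fixes A W :: "real mat"
  assumes A: "A \<in> carrier_mat n n" and sym: "transpose_mat A = A"
    and W: "W \<in> carrier_mat n n" and WtW: "transpose_mat W * W = 1\<^sub>m n"
    and eig: "A *\<^sub>v col W 0 = e \<cdot>\<^sub>v col W 0" and n0: "n \<noteq> 0"
  obtains A3 where "A3 \<in> carrier_mat (n - 1) (n - 1)" and "transpose_mat A3 = A3"
    and "transpose_mat W * A * W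
      = four_block_mat (mat 1 1 (\<lambda>_. e)) (0\<^sub>m 1 (n - 1)) (0\<^sub>m (n - 1) 1) A3"
proof -
  define A' where "A' = transpose_mat W * A * W"
  have A': "A' \<in> carrier_mat n n" unfolding A'_def using W A by simp
  have "transpose_mat A' = transpose_mat W * transpose_mat A * W"
    unfolding A'_def using W A
    by (simp add: transpose_mult[of _ n n _ n] assoc_mult_mat[of _ n n _ n _ n])
  then have A'T: "transpose_mat A' = A'" unfolding sym A'_def .
  have A'_sym: "A' $$ (i, j) = A' $$ (j, i)" if "i < n" "j < n" for i j
    using arg_cong[OF A'T, of "\<lambda>M. M $$ (j, i)"] that A' by simp
  have A'_col0: "A' $$ (i, 0) = (if i = 0 then e else 0)" if i: "i < n" for i
  proof -
    have "A' $$ (i, 0) = col W i \<bullet> (A *\<^sub>v col W 0)"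
      unfolding A'_def using W A i n0
      by (subst assoc_mult_mat[of _ n n _ n _ n]) (auto simp: mult_mat_vec_def)
    also have "\<dots> = e * (transpose_mat W * W) $$ (i, 0)"
      unfolding eig using W i n0 by simp
    finally show ?thesis unfolding WtW using i n0 by simp
  qed
  obtain A1 A2 A0 A3 where sb: "split_block A' 1 1 = (A1, A2, A0, A3)"
    by (cases "split_block A' 1 1")
  have "dim_row A' = 1 + (n - 1)" "dim_col A' = 1 + (n - 1)" using A' n0 by auto
  from split_block[OF sb this]
  have A3: "A3 \<in> carrier_mat (n - 1) (n - 1)" and blocks: "A' = four_block_mat A1 A2 A0 A3"
    by auto
  have A'_row0: "A' $$ (0, j) = (if j = 0 then e else 0)" if "j < n" for j
    using A'_sym[OF _ that] A'_col0[OF that] n0 by simp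
  have "A1 = mat 1 1 (\<lambda>_. e)"
    using sb A'_col0 n0 unfolding split_block_def Let_def by (auto intro!: eq_matI)
  moreover have "A2 = 0\<^sub>m 1 (n - 1)"
    using sb A'_row0 A' unfolding split_block_def Let_def by (auto intro!: eq_matI)
  moreover have "A0 = 0\<^sub>m (n - 1) 1"
    using sb A'_col0 A' unfolding split_block_def Let_def by (auto intro!: eq_matI)
  moreover have "transpose_mat A3 = A3"
    using sb A' A'_sym unfolding split_block_def Let_def by (auto intro!: eq_matI)
  ultimately show thesis using A3 blocks unfolding A'_def by (intro that) auto
qed

lemma one_block_orthogonal:
  fixes P :: "real mat"
  assumes P: "P \<in> carrier_mat m m" and PtP: "transpose_mat P * P = 1\<^sub>m m"
  defines "X \<equiv> four_block_mat (1\<^sub>m 1) (0\<^sub>m 1 m) (0\<^sub>m m 1) P"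
  shows "transpose_mat X * X = 1\<^sub>m (1 + m)"
proof -
  have tX: "transpose_mat X = four_block_mat (1\<^sub>m 1) (0\<^sub>m 1 m) (0\<^sub>m m 1) (transpose_mat P)"
    unfolding X_def using P by (subst transpose_four_block_mat) auto
  have "transpose_mat X * X = four_block_mat (1\<^sub>m 1) (0\<^sub>m 1 m) (0\<^sub>m m 1) (1\<^sub>m m)"
    unfolding tX unfolding X_def using P PtP
    by (subst mult_four_block_mat[OF one_carrier_mat zero_carrier_mat zero_carrier_mat _
          one_carrier_mat zero_carrier_mat zero_carrier_mat P]) auto
  then show ?thesis using four_block_one_mat[of 1 m] by simp
qed

lemma one_block_mult_block_diag:
  fixes A B D P :: "real mat"
  assumes B: "B \<in> carrier_mat 1 1" and A: "A \<in> carrier_mat m m" and P: "P \<in> carrier_mat m m"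
    and D: "D \<in> carrier_mat m m" and AP: "A * P = P * D"
  shows "four_block_mat B (0\<^sub>m 1 m) (0\<^sub>m m 1) A * four_block_mat (1\<^sub>m 1) (0\<^sub>m 1 m) (0\<^sub>m m 1) P
    = four_block_mat (1\<^sub>m 1) (0\<^sub>m 1 m) (0\<^sub>m m 1) P * four_block_mat B (0\<^sub>m 1 m) (0\<^sub>m m 1) D"
  using assms
  by (subst mult_four_block_mat[OF B zero_carrier_mat zero_carrier_mat A
        one_carrier_mat zero_carrier_mat zero_carrier_mat P],
      subst mult_four_block_mat[OF one_carrier_mat zero_carrier_mat zero_carrier_mat P
        B zero_carrier_mat zero_carrier_mat D])
    (use B in simp)

lemma char_poly_orthogonal_deflation:
  fixes A W A3 :: "real mat"
  assumes A: "A \<in> carrier_mat n n" and W: "W \<in> carrier_mat n n"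
    and WtW: "transpose_mat W * W = 1\<^sub>m n" and A3: "A3 \<in> carrier_mat (n - 1) (n - 1)"
    and blocks: "transpose_mat W * A * W
      = four_block_mat (mat 1 1 (\<lambda>_. e)) (0\<^sub>m 1 (n - 1)) (0\<^sub>m (n - 1) 1) A3"
  shows "char_poly A = [:- e, 1:] * char_poly A3"
proof -
  have "W * transpose_mat W = 1\<^sub>m n"
    using mat_mult_left_right_inverse[OF _ W WtW] W by auto
  then have "similar_mat (transpose_mat W * A * W) A"
    unfolding similar_mat_def similar_mat_wit_def using A W WtW
    by (intro exI[of _ "transpose_mat W"] exI[of _ W]) (auto simp: Let_def)
  then have "char_poly A = char_poly (transpose_mat W * A * W)"
    by (simp add: char_poly_similar)
  also have "\<dots> = char_poly (mat 1 1 (\<lambda>_. e)) * char_poly A3"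
    unfolding blocks by (rule char_poly_four_block_zeros_col[OF _ _ A3]) auto
  also have "char_poly (mat 1 1 (\<lambda>_. e)) = [:- e, 1:]"
    by (simp add: char_poly_defs det_def sign_def)
  finally show ?thesis .
qed

lemma orthogonal_diagonalization_lift:
  fixes A W A3 P3 :: "real mat"
  assumes A: "A \<in> carrier_mat n n" and W: "W \<in> carrier_mat n n"
    and WtW: "transpose_mat W * W = 1\<^sub>m n" and n0: "n \<noteq> 0"
    and A3: "A3 \<in> carrier_mat (n - 1) (n - 1)"
    and blocks: "transpose_mat W * A * W
      = four_block_mat (mat 1 1 (\<lambda>_. e)) (0\<^sub>m 1 (n - 1)) (0\<^sub>m (n - 1) 1) A3"
    and P3: "P3 \<in> carrier_mat (n - 1) (n - 1)" and P3_orth: "transpose_mat P3 * P3 = 1\<^sub>m (n - 1)"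
    and P3_eig: "A3 * P3 = P3 * mat_diag (n - 1) (\<lambda>i. es ! i)"
  defines "P \<equiv> W * four_block_mat (1\<^sub>m 1) (0\<^sub>m 1 (n - 1)) (0\<^sub>m (n - 1) 1) P3"
  shows "P \<in> carrier_mat n n" and "transpose_mat P * P = 1\<^sub>m n"
    and "A * P = P * mat_diag n (\<lambda>i. (e # es) ! i)"
proof -
  define X where "X = four_block_mat (1\<^sub>m 1) (0\<^sub>m 1 (n - 1)) (0\<^sub>m (n - 1) 1) P3"
  have n1: "1 + (n - 1) = n" using n0 by simp
  have X: "X \<in> carrier_mat n n"
    unfolding X_def using P3 n1 by (metis four_block_carrier_mat one_carrier_mat)
  then show "P \<in> carrier_mat n n" unfolding P_def X_def[symmetric] using W by simp
  have "transpose_mat P * P = transpose_mat X * (transpose_mat W * W) * X"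
    unfolding P_def X_def[symmetric] using W X
    by (simp add: transpose_mult[of _ n n _ n] assoc_mult_mat[of _ n n _ n _ n])
  also have "\<dots> = 1\<^sub>m n"
    using one_block_orthogonal[OF P3 P3_orth] X WtW unfolding X_def[symmetric] n1 by simp
  finally show "transpose_mat P * P = 1\<^sub>m n" .
  have WWt: "W * transpose_mat W = 1\<^sub>m n"
    using mat_mult_left_right_inverse[OF _ W WtW] W by auto
  have diag: "mat_diag n (\<lambda>i. (e # es) ! i) = four_block_mat (mat 1 1 (\<lambda>_. e)) (0\<^sub>m 1 (n - 1))
      (0\<^sub>m (n - 1) 1) (mat_diag (n - 1) (\<lambda>i. es ! i))"
    using n0 by (auto intro!: eq_matI simp: mat_diag_def)
  have "W * ((transpose_mat W * A * W) * X) = (W * transpose_mat W) * A * (W * X)"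
    using A W X by (simp add: assoc_mult_mat[of _ n n _ n _ n])
  then have "A * P = W * ((transpose_mat W * A * W) * X)"
    using A unfolding WWt P_def X_def[symmetric] by simp
  also have "\<dots> = W * (X * mat_diag n (\<lambda>i. (e # es) ! i))"
    unfolding blocks diag X_def
    by (subst one_block_mult_block_diag[OF _ A3 P3 _ P3_eig]) auto
  also have "\<dots> = P * mat_diag n (\<lambda>i. (e # es) ! i)"
    unfolding P_def X_def[symmetric] using W X by (simp add: assoc_mult_mat[of _ n n _ n _ n])
  finally show "A * P = P * mat_diag n (\<lambda>i. (e # es) ! i)" .
qed

theorem real_symmetric_spectral:
  fixes A :: "real mat"
  assumes "A \<in> carrier_mat n n" and "transpose_mat A = A"
    and "char_poly A = (\<Prod>e\<leftarrow>es. [:- e, 1:])"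
  shows "\<exists>P. P \<in> carrier_mat n n \<and> transpose_mat P * P = 1\<^sub>m n
    \<and> A * P = P * mat_diag n (\<lambda>i. es ! i)"
  using assms
proof (induction es arbitrary: n A)
  case Nil
  then have "n = 0" using degree_monic_char_poly[of A n] by auto
  then show ?case using Nil.prems(1)
    by (intro exI[of _ "1\<^sub>m 0"]) (auto intro!: eq_matI simp: mat_diag_def)
next
  case (Cons e es n A)
  note A = Cons.prems(1) and sym = Cons.prems(2)
  have "eigenvalue A e" using Cons.prems(3) unfolding eigenvalue_root_char_poly[OF A] by simp
  from find_eigenvector[OF A this] A
  obtain v where v: "v \<in> carrier_vec n" "v \<noteq> 0\<^sub>v n" and Av: "A *\<^sub>v v = e \<cdot>\<^sub>v v"
    unfolding eigenvector_def by blast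
  then have n0: "n \<noteq> 0" by (intro notI) (auto intro!: eq_vecI)
  obtain W c where W: "W \<in> carrier_mat n n" and WtW: "transpose_mat W * W = 1\<^sub>m n"
    and col0: "col W 0 = c \<cdot>\<^sub>v v"
    using orthonormal_basis_extension[OF v] by blast
  have "A *\<^sub>v col W 0 = e \<cdot>\<^sub>v col W 0"
    unfolding col0 using A v Av by (simp add: mult_mat_vec smult_smult_assoc mult.commute)
  then obtain A3 where A3: "A3 \<in> carrier_mat (n - 1) (n - 1)" and A3_sym: "transpose_mat A3 = A3"
    and blocks: "transpose_mat W * A * W
      = four_block_mat (mat 1 1 (\<lambda>_. e)) (0\<^sub>m 1 (n - 1)) (0\<^sub>m (n - 1) 1) A3"
    using orthogonal_deflation[OF A sym W WtW _ n0] by blast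
  have "[:- e, 1:] * char_poly A3 = [:- e, 1:] * (\<Prod>e\<leftarrow>es. [:- e, 1:])"
    using char_poly_orthogonal_deflation[OF A W WtW A3 blocks] Cons.prems(3) by simp
  then have "char_poly A3 = (\<Prod>e\<leftarrow>es. [:- e, 1:])"
    by (metis mult_cancel_left pCons_eq_0_iff zero_neq_one)
  from Cons.IH[OF A3 A3_sym this] obtain P3 where "P3 \<in> carrier_mat (n - 1) (n - 1)"
    and "transpose_mat P3 * P3 = 1\<^sub>m (n - 1)"
    and "A3 * P3 = P3 * mat_diag (n - 1) (\<lambda>i. es ! i)" by blast
  from orthogonal_diagonalization_lift[OF A W WtW n0 A3 blocks this]
  show ?case by blast
qed

section \<open>Orthonormal families\<close>

(* u k i is the i-th coordinate of the k-th vector (k < m, i < n). *)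
definition orthonormal_family :: "nat \<Rightarrow> nat \<Rightarrow> (nat \<Rightarrow> nat \<Rightarrow> real) \<Rightarrow> bool" where
  "orthonormal_family m n u \<longleftrightarrow>
     (\<forall>k<m. \<forall>l<m. (\<Sum>i<n. u k i * u l i) = (if k = l then 1 else 0))"

lemma orthonormal_family_combination_inner:
  assumes "orthonormal_family m n p"
  shows "(\<Sum>i<n. (\<Sum>k<m. a k * p k i) * (\<Sum>k<m. b k * p k i)) = (\<Sum>k<m. a k * b k)"
proof -
  have "(\<Sum>i<n. (\<Sum>k<m. a k * p k i) * (\<Sum>k<m. b k * p k i))
      = (\<Sum>i<n. \<Sum>k<m. \<Sum>l<m. a k * b l * (p k i * p l i))"
    unfolding sum_product by (simp add: mult_ac)
  also have "\<dots> = (\<Sum>k<m. \<Sum>l<m. a k * b l * (\<Sum>i<n. p k i * p l i))"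
    by (simp only: sum.swap[of _ "{..<n}" "{..<m}"] sum_distrib_left)
  also have "\<dots> = (\<Sum>k<m. a k * b k)"
    using assms unfolding orthonormal_family_def
    by (simp add: if_distrib[of "\<lambda>z. _ * z"] sum.delta cong: if_cong)
  finally show ?thesis .
qed

lemma orthonormal_family_compose:
  assumes "orthonormal_family l m q" and "orthonormal_family m n p"
  shows "orthonormal_family l n (\<lambda>j i. \<Sum>k<m. q j k * p k i)"
  using assms unfolding orthonormal_family_def
  by (simp add: orthonormal_family_combination_inner[OF assms(2)])

lemma eigen_family_quadratic_form:
  fixes a :: "nat \<Rightarrow> real"
  assumes p: "orthonormal_family m n p"
    and eig: "\<And>k i. k < m \<Longrightarrow> i < n \<Longrightarrow> (\<Sum>j<n. M i j * p k j) = lam k * p k i"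
  defines "x \<equiv> \<lambda>i. \<Sum>k<m. a k * p k i"
  shows "(\<Sum>i<n. \<Sum>j<n. M i j * (x i * x j)) = (\<Sum>k<m. lam k * (a k)\<^sup>2)"
proof -
  have row: "(\<Sum>j<n. M i j * x j) = (\<Sum>k<m. (lam k * a k) * p k i)" if "i < n" for i
  proof -
    have "(\<Sum>j<n. M i j * x j) = (\<Sum>k<m. a k * (\<Sum>j<n. M i j * p k j))"
      unfolding x_def sum_distrib_left by (subst sum.swap) (simp add: mult_ac)
    also have "\<dots> = (\<Sum>k<m. (lam k * a k) * p k i)"
      using that by (simp add: eig mult_ac)
    finally show ?thesis .
  qed
  have "(\<Sum>i<n. \<Sum>j<n. M i j * (x i * x j)) = (\<Sum>i<n. x i * (\<Sum>j<n. M i j * x j))"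
    by (simp add: sum_distrib_left mult_ac)
  also have "\<dots> = (\<Sum>i<n. x i * (\<Sum>k<m. (lam k * a k) * p k i))"
    by (intro sum.cong refl) (simp add: row)
  also have "\<dots> = (\<Sum>k<m. lam k * (a k)\<^sup>2)"
    unfolding x_def orthonormal_family_combination_inner[OF p]
    by (simp add: power2_eq_square mult_ac)
  finally show ?thesis .
qed

section \<open>Eigenvectors of the adjacency matrix\<close>

lemma adj_matrix_carrier: "adj_matrix n E \<in> carrier_mat n n"
  by (simp add: adj_matrix_def)

lemma adj_matrix_symmetric:
  assumes "simple_graph n E"
  shows "transpose_mat (adj_matrix n E) = adj_matrix n E"
  using assms unfolding adj_matrix_def simple_graph_def by (auto intro!: eq_matI)

lemma char_poly_adj_matrix:
  assumes "simple_graph n E"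
  shows "char_poly (adj_matrix n E) = (\<Prod>e\<leftarrow>adj_eigenvalues n E. [:- e, 1:])"
proof -
  obtain es where cp: "char_poly (adj_matrix n E) = (\<Prod>e\<leftarrow>es. [:- e, 1:])"
    using real_symmetric_char_poly_splits[OF adj_matrix_carrier adj_matrix_symmetric[OF assms]]
    by blast
  then have "mset (adj_eigenvalues n E) = mset es"
    unfolding adj_eigenvalues_def by (simp add: proots_prod_linear_factors)
  then have "(\<Prod>e\<leftarrow>adj_eigenvalues n E. [:- e, 1:]) = (\<Prod>e\<leftarrow>es. [:- e, 1:])"
    by (metis mset_map prod_mset_prod_list)
  with cp show ?thesis by simp
qed

lemma length_adj_eigenvalues:
  assumes "simple_graph n E"
  shows "length (adj_eigenvalues n E) = n"
  using degree_monic_char_poly[OF adj_matrix_carrier, of n E]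
    degree_linear_factors[of uminus "adj_eigenvalues n E"]
  by (simp add: char_poly_adj_matrix[OF assms])

lemma graph_lambda_antimono:
  assumes "simple_graph n E" and "1 \<le> k" and "k \<le> l" and "l \<le> n"
  shows "graph_lambda n E l \<le> graph_lambda n E k"
proof (cases "k = l")
  case False
  have "sorted_wrt (\<ge>) (adj_eigenvalues n E)"
    unfolding adj_eigenvalues_def sorted_wrt_rev by simp
  from sorted_wrt_nth_less[OF this, of "k - 1" "l - 1"] False assms
  show ?thesis unfolding graph_lambda_def by (simp add: length_adj_eigenvalues)
qed simp

lemma adj_eigenvector_family:
  assumes "simple_graph n E"
  obtains p where "orthonormal_family n n p"
    and "\<And>k i. k < n \<Longrightarrow> i < n \<Longrightarrow>
      (\<Sum>j<n. of_bool (E i j) * p k j) = graph_lambda n E (Suc k) * p k i"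
proof -
  obtain P where P: "P \<in> carrier_mat n n" and PtP: "transpose_mat P * P = 1\<^sub>m n"
    and AP: "adj_matrix n E * P = P * mat_diag n (\<lambda>i. adj_eigenvalues n E ! i)"
    using real_symmetric_spectral[OF adj_matrix_carrier adj_matrix_symmetric[OF assms]
        char_poly_adj_matrix[OF assms]] by blast
  define p where "p k i = P $$ (i, k)" for k i
  show thesis
  proof (rule that)
    show "orthonormal_family n n p"
      unfolding orthonormal_family_def
    proof (intro allI impI)
      fix k l assume "k < n" "l < n"
      then have "(transpose_mat P * P) $$ (k, l) = (\<Sum>i<n. p k i * p l i)"
        using P unfolding p_def by (simp add: scalar_prod_def lessThan_atLeast0)
      then show "(\<Sum>i<n. p k i * p l i) = (if k = l then 1 else 0)"
        using PtP \<open>k < n\<close> \<open>l < n\<close> by simp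
    qed
    fix k i assume "k < n" "i < n"
    have "(adj_matrix n E * P) $$ (i, k) = (\<Sum>j<n. of_bool (E i j) * p k j)"
      using P \<open>k < n\<close> \<open>i < n\<close> unfolding p_def adj_matrix_def
      by (simp add: scalar_prod_def lessThan_atLeast0 of_bool_def)
    moreover have "(P * mat_diag n (\<lambda>i. adj_eigenvalues n E ! i)) $$ (i, k)
        = graph_lambda n E (Suc k) * p k i"
      using P \<open>k < n\<close> \<open>i < n\<close> unfolding p_def graph_lambda_def
      by (simp add: mat_diag_mult_right[OF P])
    ultimately show "(\<Sum>j<n. of_bool (E i j) * p k j) = graph_lambda n E (Suc k) * p k i"
      using AP by simp
  qed
qed

section \<open>A zero-sum frame in the top eigenspace\<close>

(* The rows are the quaternion products i d, j d and k d. *)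
definition quat_frame :: "(nat \<Rightarrow> real) \<Rightarrow> nat \<Rightarrow> nat \<Rightarrow> real" where
  "quat_frame d k m =
     [[- d 1, d 0, - d 3, d 2], [- d 2, d 3, d 0, - d 1], [- d 3, - d 2, d 1, d 0]] ! k ! m"

lemma quat_frame_orthonormal:
  assumes "(\<Sum>m<4. (d m)\<^sup>2) = 1"
  shows "orthonormal_family 3 4 (quat_frame d)"
  using assms
  by (auto simp: orthonormal_family_def quat_frame_def eval_nat_numeral less_Suc_eq
      power2_eq_square algebra_simps)

lemma quat_frame_orthogonal:
  assumes "k < 3"
  shows "(\<Sum>m<4. quat_frame d k m * d m) = 0"
  using assms by (auto simp: quat_frame_def eval_nat_numeral less_Suc_eq algebra_simps)

lemma exists_orthonormal_frame_perp:
  fixes c :: "nat \<Rightarrow> real"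
  obtains q where "orthonormal_family 3 4 q" and "\<And>k. k < 3 \<Longrightarrow> (\<Sum>m<4. q k m * c m) = 0"
proof (cases "\<forall>m<4. c m = 0")
  case True
  have "(\<Sum>m<4::nat. (if m = 0 then 1 else 0 :: real)\<^sup>2) = 1"
    by (simp add: eval_nat_numeral)
  with True show ?thesis
    by (intro that[of "quat_frame (\<lambda>m. if m = 0 then 1 else 0)"] quat_frame_orthonormal) auto
next
  case False
  define N where "N = sqrt (\<Sum>m<4. (c m)\<^sup>2)"
  obtain m0 where "m0 < 4" "c m0 \<noteq> 0" using False by blast
  then have c_pos: "(\<Sum>m<4. (c m)\<^sup>2) > 0" by (intro sum_pos2[where i = m0]) auto
  then have "N > 0" and N_sq: "N\<^sup>2 = (\<Sum>m<4. (c m)\<^sup>2)" unfolding N_def by auto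
  define d where "d m = c m / N" for m
  have "(\<Sum>m<4. (d m)\<^sup>2) = 1"
    unfolding d_def using c_pos by (simp add: power_divide sum_divide_distrib[symmetric] N_sq)
  moreover have "(\<Sum>m<4. quat_frame d k m * c m) = N * (\<Sum>m<4. quat_frame d k m * d m)" for k
    unfolding d_def sum_distrib_left using \<open>N > 0\<close> by (simp add: field_simps)
  ultimately show ?thesis
    by (intro that[of "quat_frame d"] quat_frame_orthonormal) (auto simp: quat_frame_orthogonal)
qed

lemma zero_sum_frame_in_top_eigenspace:
  assumes p: "orthonormal_family 4 n p"
    and eig: "\<And>k i. k < 4 \<Longrightarrow> i < n \<Longrightarrow> (\<Sum>j<n. M i j * p k j) = lam k * p k i"
    and lam_ge: "\<And>k. k < 4 \<Longrightarrow> x \<le> lam k"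
  obtains u where "orthonormal_family 3 n u"
    and "\<And>k. k < 3 \<Longrightarrow> (\<Sum>i<n. u k i) = 0"
    and "\<And>k. k < 3 \<Longrightarrow> x \<le> (\<Sum>i<n. \<Sum>j<n. M i j * (u k i * u k j))"
proof -
  obtain q where q: "orthonormal_family 3 4 q"
    and q_perp: "\<And>k. k < 3 \<Longrightarrow> (\<Sum>l<4. q k l * (\<Sum>i<n. p l i)) = 0"
    using exists_orthonormal_frame_perp[of "\<lambda>l. \<Sum>i<n. p l i"] by blast
  define u where "u k i = (\<Sum>l<4. q k l * p l i)" for k i
  show ?thesis
  proof (rule that)
    show "orthonormal_family 3 n u"
      unfolding u_def by (rule orthonormal_family_compose[OF q p])
    show "(\<Sum>i<n. u k i) = 0" if "k < 3" for k
      using q_perp[OF that] unfolding u_def sum_distrib_left by (subst sum.swap) simp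
    show "x \<le> (\<Sum>i<n. \<Sum>j<n. M i j * (u k i * u k j))" if "k < 3" for k
    proof -
      have "x = (\<Sum>l<4. x * (q k l)\<^sup>2)"
        using q that unfolding orthonormal_family_def
        by (simp add: power2_eq_square sum_distrib_left[symmetric])
      also have "\<dots> \<le> (\<Sum>l<4. lam l * (q k l)\<^sup>2)"
        by (intro sum_mono mult_right_mono lam_ge) auto
      also have "\<dots> = (\<Sum>i<n. \<Sum>j<n. M i j * (u k i * u k j))"
        unfolding u_def by (rule eigen_family_quadratic_form[OF p eig, symmetric])
      finally show ?thesis .
    qed
  qed
qed

section \<open>The absolute Gram sum of an orthonormal 3-frame\<close>

definition proj_kernel :: "nat \<Rightarrow> (nat \<Rightarrow> nat \<Rightarrow> real) \<Rightarrow> nat \<Rightarrow> nat \<Rightarrow> real" where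
  "proj_kernel m u i j = (\<Sum>k<m. u k i * u k j)"

lemma proj_kernel_sym: "proj_kernel m u i j = proj_kernel m u j i"
  unfolding proj_kernel_def by (simp add: mult.commute)

lemma proj_kernel_diag_nonneg: "0 \<le> proj_kernel m u i i"
  unfolding proj_kernel_def by (simp add: sum_nonneg)

lemma proj_kernel_cauchy_schwarz:
  "(proj_kernel m u i j)\<^sup>2 \<le> proj_kernel m u i i * proj_kernel m u j j"
  unfolding proj_kernel_def using Cauchy_Schwarz_ineq_sum[of "\<lambda>k. u k i" "\<lambda>k. u k j" "{..<m}"]
  by (simp add: power2_eq_square)

lemma abs_proj_kernel_le:
  "\<bar>proj_kernel m u i j\<bar> \<le> sqrt (proj_kernel m u i i) * sqrt (proj_kernel m u j j)"
proof -
  have "\<bar>proj_kernel m u i j\<bar> = sqrt ((proj_kernel m u i j)\<^sup>2)" by simp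
  also have "\<dots> \<le> sqrt (proj_kernel m u i i * proj_kernel m u j j)"
    by (intro real_sqrt_le_mono proj_kernel_cauchy_schwarz)
  finally show ?thesis by (simp add: real_sqrt_mult)
qed

lemma proj_kernel_row_sq_sum:
  assumes "orthonormal_family m n u"
  shows "(\<Sum>j<n. (proj_kernel m u i j)\<^sup>2) = proj_kernel m u i i"
proof -
  have "(\<Sum>j<n. (proj_kernel m u i j)\<^sup>2)
      = (\<Sum>j<n. \<Sum>k<m. \<Sum>l<m. u k i * u l i * (u k j * u l j))"
    unfolding proj_kernel_def power2_eq_square sum_product by (simp add: mult_ac)
  also have "\<dots> = (\<Sum>k<m. \<Sum>l<m. u k i * u l i * (\<Sum>j<n. u k j * u l j))"
    by (simp only: sum.swap[of _ "{..<n}" "{..<m}"] sum_distrib_left)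
  also have "\<dots> = proj_kernel m u i i"
    using assms unfolding orthonormal_family_def proj_kernel_def
    by (simp add: if_distrib[of "\<lambda>z. _ * z"] sum.delta cong: if_cong)
  finally show ?thesis .
qed

lemma proj_kernel_trace:
  assumes "orthonormal_family m n u"
  shows "(\<Sum>i<n. proj_kernel m u i i) = m"
proof -
  have "(\<Sum>i<n. proj_kernel m u i i) = (\<Sum>k<m. \<Sum>i<n. u k i * u k i)"
    unfolding proj_kernel_def by (rule sum.swap)
  thus ?thesis using assms unfolding orthonormal_family_def by simp
qed

lemma proj_kernel_total_sum:
  assumes "\<And>k. k < m \<Longrightarrow> (\<Sum>i<n. u k i) = 0"
  shows "(\<Sum>i<n. \<Sum>j<n. proj_kernel m u i j) = 0"
proof -
  have "(\<Sum>i<n. \<Sum>j<n. proj_kernel m u i j) = (\<Sum>k<m. (\<Sum>i<n. u k i) * (\<Sum>j<n. u k j))"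
    unfolding proj_kernel_def sum_product by (simp only: sum.swap[of _ "{..<n}" "{..<m}"])
  thus ?thesis using assms by simp
qed

lemma sum_sqrt_proj_kernel_diag_sq_le:
  assumes "orthonormal_family m n u"
  shows "(\<Sum>i<n. sqrt (proj_kernel m u i i))\<^sup>2 \<le> real m * real n"
  using sum_squared_le_sum_of_squares[of "\<lambda>i. sqrt (proj_kernel m u i i)" "{..<n}"]
  by (simp add: proj_kernel_diag_nonneg proj_kernel_trace[OF assms])

lemma normalized_proj_kernel_sq_sum_le:
  assumes u: "orthonormal_family m n u"
  defines "r \<equiv> \<lambda>i. sqrt (proj_kernel m u i i)"
  shows "(\<Sum>i<n. \<Sum>j<n. (proj_kernel m u i j)\<^sup>2 / (r i * r j)) \<le> real n"
proof -
  let ?K = "proj_kernel m u"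
  have r_sq: "(r i)\<^sup>2 = ?K i i" for i
    unfolding r_def by (simp add: proj_kernel_diag_nonneg)
  have am_gm: "(?K i j)\<^sup>2 / (r i * r j) \<le> ((?K i j)\<^sup>2 / ?K i i + (?K i j)\<^sup>2 / ?K j j) / 2" for i j
  proof (cases "?K i i = 0 \<or> ?K j j = 0")
    case True
    then have "?K i j = 0" using proj_kernel_cauchy_schwarz[of m u i j] by auto
    then show ?thesis by simp
  next
    case False
    then have "r i \<noteq> 0" "r j \<noteq> 0" unfolding r_def by auto
    have "(?K i j)\<^sup>2 / (r i * r j) = (?K i j)\<^sup>2 * (2 * (1 / r i) * (1 / r j)) / 2"
      by simp
    also have "\<dots> \<le> (?K i j)\<^sup>2 * ((1 / r i)\<^sup>2 + (1 / r j)\<^sup>2) / 2"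
      by (intro divide_right_mono mult_left_mono sum_squares_bound) auto
    also have "\<dots> = ((?K i j)\<^sup>2 / ?K i i + (?K i j)\<^sup>2 / ?K j j) / 2"
      by (simp add: r_sq[symmetric] power_one_over field_simps)
    finally show ?thesis .
  qed
  have row: "(\<Sum>i<n. \<Sum>j<n. (?K i j)\<^sup>2 / ?K i i) \<le> real n"
  proof -
    have "(\<Sum>i<n. \<Sum>j<n. (?K i j)\<^sup>2 / ?K i i) = (\<Sum>i<n. ?K i i / ?K i i)"
      by (simp add: sum_divide_distrib[symmetric] proj_kernel_row_sq_sum[OF u])
    also have "\<dots> \<le> (\<Sum>i<n. 1)" by (intro sum_mono) simp
    finally show ?thesis by simp
  qed
  have col: "(\<Sum>i<n. \<Sum>j<n. (?K i j)\<^sup>2 / ?K j j) = (\<Sum>i<n. \<Sum>j<n. (?K i j)\<^sup>2 / ?K i i)"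
    by (subst sum.swap) (intro sum.cong refl, metis proj_kernel_sym)
  have "(\<Sum>i<n. \<Sum>j<n. (?K i j)\<^sup>2 / (r i * r j))
      \<le> (\<Sum>i<n. \<Sum>j<n. ((?K i j)\<^sup>2 / ?K i i + (?K i j)\<^sup>2 / ?K j j) / 2)"
    by (intro sum_mono am_gm)
  also have "\<dots> = ((\<Sum>i<n. \<Sum>j<n. (?K i j)\<^sup>2 / ?K i i) + (\<Sum>i<n. \<Sum>j<n. (?K i j)\<^sup>2 / ?K j j)) / 2"
    by (simp add: sum.distrib add_divide_distrib sum_divide_distrib)
  finally show ?thesis using row col by simp
qed

(* A basis of the harmonic quartics on R^3 (coordinates x 0, x 1, x 2); with these weights,
   legendre4_addition is the addition theorem for the Legendre polynomial
   P_4(t) = (35 t^4 - 30 t^2 + 3)/8. *)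
definition harm4 :: "(nat \<Rightarrow> real) \<Rightarrow> real list" where
  "harm4 x = (let X = (x 0)\<^sup>2 + (x 1)\<^sup>2 + (x 2)\<^sup>2 in
     [(x 0)^4 - 6 * (x 0)\<^sup>2 * (x 1)\<^sup>2 + (x 1)^4,
      (x 0)^3 * x 1 - x 0 * (x 1)^3,
      x 2 * ((x 0)^3 - 3 * x 0 * (x 1)\<^sup>2),
      x 2 * (3 * (x 0)\<^sup>2 * x 1 - (x 1)^3),
      (7 * (x 2)\<^sup>2 - X) * ((x 0)\<^sup>2 - (x 1)\<^sup>2),
      (7 * (x 2)\<^sup>2 - X) * x 0 * x 1,
      x 2 * (7 * (x 2)\<^sup>2 - 3 * X) * x 0,
      x 2 * (7 * (x 2)\<^sup>2 - 3 * X) * x 1,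
      35 * (x 2)^4 - 30 * (x 2)\<^sup>2 * X + 3 * X\<^sup>2])"

definition harm4_weight :: "real list" where
  "harm4_weight = [35/8, 70, 35, 35, 5/2, 10, 5, 5, 1/8]"

lemma harm4_weight_nonneg: "l < 9 \<Longrightarrow> 0 \<le> harm4_weight ! l"
  using nth_mem[of l harm4_weight] by (auto simp: harm4_weight_def)

lemma legendre4_addition:
  fixes x y :: "nat \<Rightarrow> real"
  defines "s \<equiv> \<Sum>k<3. x k * y k" and "X \<equiv> \<Sum>k<3. (x k)\<^sup>2" and "Y \<equiv> \<Sum>k<3. (y k)\<^sup>2"
  shows "35 * s^4 - 30 * s\<^sup>2 * (X * Y) + 3 * (X * Y)\<^sup>2
    = (\<Sum>l<9. harm4_weight ! l * (harm4 x ! l * harm4 y ! l))"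
  unfolding s_def X_def Y_def harm4_def harm4_weight_def Let_def
  by (simp add: eval_nat_numeral) Groebner_Basis.algebra

lemma legendre4_addition_normalized:
  fixes x y :: "nat \<Rightarrow> real"
  defines "s \<equiv> \<Sum>k<3. x k * y k"
    and "r \<equiv> sqrt (\<Sum>k<3. (x k)\<^sup>2)" and "r' \<equiv> sqrt (\<Sum>k<3. (y k)\<^sup>2)"
  shows "35 * s^4 / (r * r')^3 - 30 * s\<^sup>2 / (r * r') + 3 * (r * r')
    = (\<Sum>l<9. harm4_weight ! l * (harm4 x ! l / r^3 * (harm4 y ! l / r'^3)))"
proof (cases "r = 0 \<or> r' = 0")
  case True
  then have "s = 0"
    using Cauchy_Schwarz_ineq_sum[of x y "{..<3}"] unfolding s_def r_def r'_def
    by (auto simp: sum_nonneg)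
  with True show ?thesis by auto
next
  case False
  have rr: "(r * r')\<^sup>2 = (\<Sum>k<3. (x k)\<^sup>2) * (\<Sum>k<3. (y k)\<^sup>2)"
    unfolding r_def r'_def by (simp add: power_mult_distrib sum_nonneg)
  have "35 * s^4 / (r * r')^3 - 30 * s\<^sup>2 / (r * r') + 3 * (r * r')
      = (35 * s^4 - 30 * s\<^sup>2 * (r * r')\<^sup>2 + 3 * ((r * r')\<^sup>2)\<^sup>2) / (r * r')^3"
    using False by (simp add: field_simps) Groebner_Basis.algebra
  also have "\<dots> = (\<Sum>l<9. harm4_weight ! l * (harm4 x ! l * harm4 y ! l)) / (r * r')^3"
    unfolding rr s_def by (rule arg_cong[where f = "\<lambda>z. z / _"], rule legendre4_addition)
  also have "\<dots> = (\<Sum>l<9. harm4_weight ! l * (harm4 x ! l / r^3 * (harm4 y ! l / r'^3)))"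
    by (simp add: sum_divide_distrib power_mult_distrib)
  finally show ?thesis .
qed

lemma legendre4_proj_kernel_sum_nonneg:
  fixes u :: "nat \<Rightarrow> nat \<Rightarrow> real"
  defines "K \<equiv> proj_kernel 3 u" and "r \<equiv> \<lambda>i. sqrt (proj_kernel 3 u i i)"
  shows "0 \<le> (\<Sum>i<n. \<Sum>j<n.
    35 * (K i j)^4 / (r i * r j)^3 - 30 * (K i j)\<^sup>2 / (r i * r j) + 3 * (r i * r j))"
proof -
  define h where "h l i = harm4 (\<lambda>k. u k i) ! l / (r i)^3" for l i
  have "35 * (K i j)^4 / (r i * r j)^3 - 30 * (K i j)\<^sup>2 / (r i * r j) + 3 * (r i * r j)
      = (\<Sum>l<9. harm4_weight ! l * (h l i * h l j))" for i j
    using legendre4_addition_normalized[of "\<lambda>k. u k i" "\<lambda>k. u k j"]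
    unfolding K_def r_def h_def proj_kernel_def by (simp add: power2_eq_square)
  then have "(\<Sum>i<n. \<Sum>j<n.
      35 * (K i j)^4 / (r i * r j)^3 - 30 * (K i j)\<^sup>2 / (r i * r j) + 3 * (r i * r j))
      = (\<Sum>l<9. \<Sum>i<n. \<Sum>j<n. harm4_weight ! l * (h l i * h l j))"
    by (simp only: sum.swap[of _ "{..<9}" "{..<n}"])
  also have "\<dots> = (\<Sum>l<9. harm4_weight ! l * (\<Sum>i<n. h l i)\<^sup>2)"
    unfolding power2_eq_square sum_product by (simp only: sum_distrib_left)
  also have "\<dots> \<ge> 0"
    by (intro sum_nonneg mult_nonneg_nonneg harm4_weight_nonneg) auto
  finally show ?thesis .
qed

lemma quartic_majorant_unit_interval:
  fixes s :: real
  assumes "0 \<le> s" and "s \<le> 1"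
  shows "s \<le> (1 + sqrt 5)/16 + (7 * sqrt 5 - 5)/8 * s\<^sup>2 + (25 - 15 * sqrt 5)/16 * s^4"
proof -
  define q where "q = sqrt 5"
  have "q\<^sup>2 = 5" and "q > 2" unfolding q_def by (simp_all add: real_less_rsqrt)
  have "(1 - s) * (q * s - 1)\<^sup>2 * ((15 * q - 25) * s + 5 * (1 + q))
      = 5 * ((1 + q) + 2 * (7 * q - 5) * s\<^sup>2 + (25 - 15 * q) * s^4 - 16 * s)
        + (q\<^sup>2 - 5) * (10 * s^3 * q + 5 * s\<^sup>2 * q - 15 * s^4 * q - 15 * s\<^sup>2 - 10 * s + 25 * s^4)"
    by Groebner_Basis.algebra
  moreover have "0 \<le> (1 - s) * (q * s - 1)\<^sup>2 * ((15 * q - 25) * s + 5 * (1 + q))"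
    using assms \<open>q > 2\<close> by (intro mult_nonneg_nonneg) auto
  ultimately have "0 \<le> (1 + q) + 2 * (7 * q - 5) * s\<^sup>2 + (25 - 15 * q) * s^4 - 16 * s"
    using \<open>q\<^sup>2 = 5\<close> by simp
  then show ?thesis unfolding q_def by (simp add: field_simps)
qed

lemma abs_le_quartic_majorant:
  fixes t p :: real
  assumes "\<bar>t\<bar> \<le> p"
  shows "\<bar>t\<bar> \<le> (1 + sqrt 5)/16 * p + (7 * sqrt 5 - 5)/8 * (t\<^sup>2 / p)
    + (25 - 15 * sqrt 5)/16 * (t^4 / p^3)"
proof (cases "p = 0")
  case False
  with assms have "p > 0" by linarith
  define s where "s = \<bar>t\<bar> / p"
  have "0 \<le> s" "s \<le> 1" unfolding s_def using assms \<open>p > 0\<close> by auto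
  have "\<bar>t\<bar> = p * s" unfolding s_def using \<open>p > 0\<close> by simp
  also have "\<dots> \<le> p * ((1 + sqrt 5)/16 + (7 * sqrt 5 - 5)/8 * s\<^sup>2 + (25 - 15 * sqrt 5)/16 * s^4)"
    using quartic_majorant_unit_interval[OF \<open>0 \<le> s\<close> \<open>s \<le> 1\<close>] \<open>p > 0\<close> by simp
  also have "\<dots> = (1 + sqrt 5)/16 * p + (7 * sqrt 5 - 5)/8 * (t\<^sup>2 / p)
      + (25 - 15 * sqrt 5)/16 * (t^4 / p^3)"
    unfolding s_def using \<open>p > 0\<close>
    by (simp add: field_simps power_even_abs_numeral power2_abs) Groebner_Basis.algebra
  finally show ?thesis .
qed (use assms in simp)

theorem proj_kernel_abs_sum_le:
  assumes u: "orthonormal_family 3 n u"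
  shows "(\<Sum>i<n. \<Sum>j<n. \<bar>proj_kernel 3 u i j\<bar>) \<le> (1 + sqrt 5)/2 * real n"
proof -
  define K where "K = proj_kernel 3 u"
  define r where "r i = sqrt (K i i)" for i
  define a b c where "a = (1 + sqrt 5)/16" and "b = (7 * sqrt 5 - 5)/8"
    and "c = (25 - 15 * sqrt 5)/16"
  have "sqrt 5 > 2" by (simp add: real_less_rsqrt)
  define R2 where "R2 = (\<Sum>i<n. \<Sum>j<n. r i * r j)"
  define Z2 where "Z2 = (\<Sum>i<n. \<Sum>j<n. (K i j)\<^sup>2 / (r i * r j))"
  define Z4 where "Z4 = (\<Sum>i<n. \<Sum>j<n. (K i j)^4 / (r i * r j)^3)"
  have "(\<Sum>i<n. \<Sum>j<n. \<bar>K i j\<bar>)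
      \<le> (\<Sum>i<n. \<Sum>j<n. a * (r i * r j) + b * ((K i j)\<^sup>2 / (r i * r j))
          + c * ((K i j)^4 / (r i * r j)^3))"
    unfolding a_def b_def c_def K_def r_def
    by (intro sum_mono abs_le_quartic_majorant abs_proj_kernel_le)
  also have "\<dots> = a * R2 + b * Z2 + c * Z4"
    unfolding R2_def Z2_def Z4_def by (simp add: sum.distrib sum_distrib_left)
  also have "\<dots> \<le> (a - 3 * c / 35) * R2 + (b + 6 * c / 7) * Z2"
  proof -
    have "0 \<le> 35 * Z4 - 30 * Z2 + 3 * R2"
      using legendre4_proj_kernel_sum_nonneg[of u n]
      unfolding K_def r_def R2_def Z2_def Z4_def
      by (simp add: sum_subtractf sum.distrib sum_distrib_left)
    moreover have "c \<le> 0" unfolding c_def using \<open>sqrt 5 > 2\<close> by simp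
    ultimately have "c * Z4 \<le> c * ((30 * Z2 - 3 * R2) / 35)"
      by (intro mult_left_mono_neg) auto
    then show ?thesis by (simp add: algebra_simps)
  qed
  also have "\<dots> \<le> (a - 3 * c / 35) * (3 * real n) + (b + 6 * c / 7) * real n"
  proof (intro add_mono mult_left_mono)
    have "R2 = (\<Sum>i<n. r i)\<^sup>2" unfolding R2_def by (simp add: power2_eq_square sum_product)
    then show "R2 \<le> 3 * real n"
      using sum_sqrt_proj_kernel_diag_sq_le[OF u] unfolding r_def K_def by simp
    show "Z2 \<le> real n"
      using normalized_proj_kernel_sq_sum_le[OF u] unfolding Z2_def K_def r_def .
    show "0 \<le> a - 3 * c / 35" "0 \<le> b + 6 * c / 7"
      unfolding a_def b_def c_def using \<open>sqrt 5 > 2\<close> by (simp_all add: field_simps)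
  qed
  also have "\<dots> = (1 + sqrt 5)/2 * real n"
    unfolding a_def b_def c_def by (simp add: field_simps)
  finally show ?thesis unfolding K_def .
qed

section \<open>The fourth eigenvalue\<close>

lemma loopless_adjacency_form_le:
  fixes t :: "nat \<Rightarrow> nat \<Rightarrow> real"
  assumes "\<And>i. i < n \<Longrightarrow> \<not> E i i"
  shows "(\<Sum>i<n. \<Sum>j<n. of_bool (E i j) * t i j)
    \<le> ((\<Sum>i<n. \<Sum>j<n. \<bar>t i j\<bar>) + (\<Sum>i<n. \<Sum>j<n. t i j)) / 2 - (\<Sum>i<n. t i i)"
proof -
  have "of_bool (E i j) * t i j \<le> (\<bar>t i j\<bar> + t i j) / 2 - (if i = j then t i j else 0)"
    if "i < n" for i j
    using assms[OF that] by (cases "i = j") auto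
  then have "(\<Sum>i<n. \<Sum>j<n. of_bool (E i j) * t i j)
      \<le> (\<Sum>i<n. \<Sum>j<n. (\<bar>t i j\<bar> + t i j) / 2 - (if i = j then t i j else 0))"
    by (intro sum_mono) auto
  also have "\<dots> = ((\<Sum>i<n. \<Sum>j<n. \<bar>t i j\<bar>) + (\<Sum>i<n. \<Sum>j<n. t i j)) / 2 - (\<Sum>i<n. t i i)"
    by (simp add: sum_subtractf sum.distrib flip: sum_divide_distrib)
  finally show ?thesis .
qed

lemma zero_sum_frame_adjacency_form_le:
  assumes "\<And>i. i < n \<Longrightarrow> \<not> E i i"
    and u: "orthonormal_family 3 n u" and "\<And>k. k < 3 \<Longrightarrow> (\<Sum>i<n. u k i) = 0"
  shows "(\<Sum>k<3. \<Sum>i<n. \<Sum>j<n. of_bool (E i j) * (u k i * u k j)) \<le> (1 + sqrt 5)/4 * real n - 3"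
proof -
  let ?K = "proj_kernel 3 u"
  have "(\<Sum>k<3. \<Sum>i<n. \<Sum>j<n. of_bool (E i j) * (u k i * u k j))
      = (\<Sum>i<n. \<Sum>j<n. of_bool (E i j) * ?K i j)"
    unfolding proj_kernel_def sum_distrib_left
    by (simp only: sum.swap[of _ "{..<3}" "{..<n}"])
  also have "\<dots> \<le> ((\<Sum>i<n. \<Sum>j<n. \<bar>?K i j\<bar>) + (\<Sum>i<n. \<Sum>j<n. ?K i j)) / 2 - (\<Sum>i<n. ?K i i)"
    by (rule loopless_adjacency_form_le) (use assms in auto)
  also have "\<dots> \<le> (1 + sqrt 5)/4 * real n - 3"
  proof -
    have "(\<Sum>i<n. \<Sum>j<n. ?K i j) = 0"
      by (rule proj_kernel_total_sum) (use assms(3) in auto)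
    then show ?thesis
      using proj_kernel_abs_sum_le[OF u] proj_kernel_trace[OF u] by (simp add: field_simps)
  qed
  finally show ?thesis .
qed

theorem mainTheorem5:
  fixes n :: nat and E :: "nat \<Rightarrow> nat \<Rightarrow> bool"
  assumes "simple_graph n E" and "n \<ge> 4"
  shows "graph_lambda n E 4 \<le> (1 + sqrt 5) / 12 * real n - 1"
proof -
  obtain p where p: "orthonormal_family n n p"
    and eig: "\<And>k i. k < n \<Longrightarrow> i < n \<Longrightarrow>
      (\<Sum>j<n. of_bool (E i j) * p k j) = graph_lambda n E (Suc k) * p k i"
    using adj_eigenvector_family[OF assms(1)] by blast
  have p4: "orthonormal_family 4 n p"
    using p assms(2) unfolding orthonormal_family_def by auto
  have eig4: "(\<Sum>j<n. of_bool (E i j) * p k j) = graph_lambda n E (Suc k) * p k i"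
    if "k < 4" "i < n" for k i
    using eig[of k i] that assms(2) by simp
  have top4: "graph_lambda n E 4 \<le> graph_lambda n E (Suc k)" if "k < 4" for k
    by (rule graph_lambda_antimono[OF assms(1)]) (use that assms(2) in auto)
  obtain u where u: "orthonormal_family 3 n u"
    and zero_sum: "\<And>k. k < 3 \<Longrightarrow> (\<Sum>i<n. u k i) = 0"
    and rayleigh: "\<And>k. k < 3 \<Longrightarrow>
      graph_lambda n E 4 \<le> (\<Sum>i<n. \<Sum>j<n. of_bool (E i j) * (u k i * u k j))"
    using zero_sum_frame_in_top_eigenspace[OF p4 eig4 top4] by blast
  have "3 * graph_lambda n E 4 = (\<Sum>k<3::nat. graph_lambda n E 4)" by simp
  also have "\<dots> \<le> (\<Sum>k<3. \<Sum>i<n. \<Sum>j<n. of_bool (E i j) * (u k i * u k j))"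
    by (intro sum_mono rayleigh) simp
  also have "\<dots> \<le> (1 + sqrt 5)/4 * real n - 3"
    using assms(1) u zero_sum unfolding simple_graph_def
    by (intro zero_sum_frame_adjacency_form_le) auto
  finally show ?thesis by simp
qed

end
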